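(* For any data as described in the context (any integers $I\ge 2$, $N^{\mathsf M},N^{\mathsf R}\ge 1$, $L\ge1$, $B_j\ge 1$, any discount factor $\delta\in(0,1)$, any real cost, yield and salvage parameters, any spot prices $s^l_i\in\mathbb{R}^3_+$, any real penalty coefficients $\Delta^l_{i,j,b}$, and any initial mode $x_0\in\{\mathsf O,\mathsf M_{N^{\mathsf M}}\}$), the pathwise linear program (PLP) has a finite optimal objective function value and at least one bounded optimal solution.
   Context: Stages are $\mathcal{I}=\{0,1,\dots,I-1\}$. Operating modes are $\mathsf A$ (abandoned), $\mathsf M_1,\dots,\mathsf M_{N^{\mathsf M}}$ (mothballing/mothballed), $\mathsf O$ (operational), $\mathsf R_1,\dots,\mathsf R_{N^{\mathsf R}-1}$ (reactivating). Let $\mathcal{X}'=\{\mathsf O,\mathsf M_{N^{\mathsf M}}\}$ and $\mathcal{X}''=\mathcal{X}'\cup\{\mathsf A\}$. Feasible action sets $\mathcal{A}_i(x)$ for $x\in\mathcal{X}''$: for $i\le I-2$, $\mathcal{A}_i(\mathsf O)=\{\mathsf A,\mathsf M_1,\mathsf P,\mathsf S\}$ if $i\le I-1-N^{\mathsf M}$ and $\{\mathsf A,\mathsf P,\mathsf S\}$ otherwise; $\mathcal{A}_i(\mathsf M_{N^{\mathsf M}})=\{\mathsf A,\mathsf M_{N^{\mathsf M}},\mathsf R_1\}$ if $i\le I-1-N^{\mathsf R}$ and $\{\mathsf A,\mathsf M_{N^{\mathsf M}}\}$ otherwise; $\mathcal{A}_i(\mathsf A)=\{\mathsf A\}$; and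 $\mathcal{A}_{I-1}(x)=\{\mathsf A\}$ for all $x$. For spot prices $s=(s^{C},s^{E},s^{N})\in\mathbb{R}^3_+$ and real constants $Q,\gamma_C,\gamma_N,\mathsf C_{\mathsf P},\mathsf C_{\mathsf S},\mathsf C_{\mathsf M},\mathsf I_{\mathsf M},\mathsf I_{\mathsf R},S$, the reward is $r(\mathsf O,s,\mathsf P)=(s^E-\gamma_C s^C-\gamma_N s^N)Q-\mathsf C_{\mathsf P}$, $r(\mathsf O,s,\mathsf S)=-\mathsf C_{\mathsf S}$, $r(\mathsf O,s,\mathsf M_1)=-\mathsf I_{\mathsf M}$, $r(\mathsf M_{N^{\mathsf M}},s,\mathsf M_{N^{\mathsf M}})=-\mathsf C_{\mathsf M}$, $r(\mathsf M_{N^{\mathsf M}},s,\mathsf R_1)=-\mathsf I_{\mathsf R}$, $r(\mathsf O,s,\mathsf A)=r(\mathsf M_{N^{\mathsf M}},s,\mathsf A)=S$, $r(\mathsf A,s,\mathsf A)=0$. The modified transition $f'(x,a)$ equals $\mathsf O$ for $(x,a)\in\{(\mathsf O,\mathsf P),(\mathsf O,\mathsf S),(\mathsf M_{N^{\mathsf M}},\mathsf R_1)\}$, equals $\mathsf M_{N^{\mathsf M}}$ for $(x,a)\in\{(\mathsf O,\mathsf M_1),(\mathsf M_{N^{\mathsf M}},\mathsf M_{N^{\mathsf M}})\}$, and equals $\mathsf A$ when $a=\mathsf A$. The stage transition is $g(i,x,a)=i+N^{\mathsf M}$ if $(x,a)=(\mathsf O,\mathsf M_1)$, $i+N^{\mathsf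 R}$ if $(x,a)=(\mathsf M_{N^{\mathsf M}},\mathsf R_1)$, and $i+1$ otherwise. Data: $L$ sample paths indexed by $l\in\mathcal{L}=\{1,\dots,L\}$, with spot prices $s^l_i\in\mathbb{R}^3_+$ for each $i\in\mathcal{I}$, and real penalty coefficients $\Delta^l_{i,j,b}$ for $i<j$, $b\in\mathcal{B}_j=\{1,\dots,B_j\}$ (in the paper, $\Delta^l_{i,j,b}=\delta^{j-i}(\phi_{j,b}(F^l_j)-\mathbb{E}[\phi_{j,b}(F_j)\mid F^l_i])$ for basis functions $\phi_{j,b}$ of simulated forward curves $F^l$). Decision variables: weights $\beta_{j,x,b}\in\mathbb{R}$ for $j\in\{1,\dots,I-2\}$, $x\in\mathcal{X}'$, $b\in\mathcal{B}_j$; and $U^l_0(x_0)$ and $U^l_i(x)$ for $l\in\mathcal{L}$, $i\in\{1,\dots,I-1\}$, $x\in\mathcal{X}''$. For $(l,i,x,a)$ let $j=g(i,x,a)$, $x'=f'(x,a)$, and define the penalty $\pi^l_i(x,a;\beta)=\sum_{b\in\mathcal{B}_j}\beta_{j,x',b}\Delta^l_{i,j,b}$ if $x'\in\mathcal{X}'$ and $j\le I-2$, and $0$ otherwise. PLP is: minimize $\frac1L\sum_{l\in\mathcal{L}}U^l_0(x_0)$ over $(\beta,U)$ subject to, for all $l$: $U^l_0(x_0)\ge r(x_0,s^l_0,a)-\pi^l_0(x_0,a;\beta)+\delta U^l_{g(0,x_0,a)}(f'(x_0,a))$ for all $a\in\mathcal{A}_0(x_0)$; $U^l_i(x)\ge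 r(x,s^l_i,a)-\pi^l_i(x,a;\beta)+\delta U^l_{g(i,x,a)}(f'(x,a))$ for all $i\in\{1,\dots,I-2\}$, $x\in\mathcal{X}''$, $a\in\mathcal{A}_i(x)$; and $U^l_{I-1}(x)\ge r(x,s^l_{I-1},\mathsf A)$ for all $x\in\mathcal{X}''$. *)

theory Defs
  imports Complex_Main
begin

text \<open>Operating modes relevant for PLP: abandoned (A), fully mothballed (M_{N^M}),
  operational (O). The intermediate modes M_1..M_{N^M-1}, R_1..R_{N^R-1} are
  skipped by the modified transition f' and the stage transition g.\<close>
datatype mode = ModeA | ModeM | ModeO

text \<open>Actions: A (abandon), M_1 (start mothballing), P (produce), S (suspend),
  M_{N^M} (stay mothballed), R_1 (start reactivating).\<close>
datatype action = ActA | ActM1 | ActP | ActS | ActMN | ActR1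

record plp_data =
  nI   :: nat
  nM   :: nat
  nR   :: nat
  nL   :: nat
  nB   :: "nat \<Rightarrow> nat"
  disc :: real
  qQ   :: real
  gC   :: real
  gN   :: real
  cP   :: real
  cS   :: real
  cM   :: real
  iM   :: real
  iR   :: real
  salv :: real
  spot :: "nat \<Rightarrow> nat \<Rightarrow> real \<times> real \<times> real"   (* spot l i = (s^C, s^E, s^N) *)
  pen  :: "nat \<Rightarrow> nat \<Rightarrow> nat \<Rightarrow> nat \<Rightarrow> real"

definition feas_act :: "plp_data \<Rightarrow> nat \<Rightarrow> mode \<Rightarrow> action set" where
  "feas_act d i x =
     (if i \<le> nI d - 2 then
        (case x of
           ModeO \<Rightarrow> (if i + nM d \<le> nI d - 1 then {ActA, ActM1, ActP, ActS} else {ActA, ActP, ActS})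
         | ModeM \<Rightarrow> (if i + nR d \<le> nI d - 1 then {ActA, ActMN, ActR1} else {ActA, ActMN})
         | ModeA \<Rightarrow> {ActA})
      else {ActA})"

text \<open>Reward r(x,s,a); s = (s^C, s^E, s^N). Infeasible pairs are given value 0
  (they never occur in PLP).\<close>
definition reward :: "plp_data \<Rightarrow> mode \<Rightarrow> real \<times> real \<times> real \<Rightarrow> action \<Rightarrow> real" where
  "reward d x s a =
     (case s of (sC, sE, sN) \<Rightarrow>
       (case (x, a) of
          (ModeO, ActP) \<Rightarrow> (sE - gC d * sC - gN d * sN) * qQ d - cP d
        | (ModeO, ActS) \<Rightarrow> - cS d
        | (ModeO, ActM1) \<Rightarrow> - iM d
        | (ModeM, ActMN) \<Rightarrow> - cM d
        | (ModeM, ActR1) \<Rightarrow> - iR d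
        | (ModeO, ActA) \<Rightarrow> salv d
        | (ModeM, ActA) \<Rightarrow> salv d
        | (ModeA, ActA) \<Rightarrow> 0
        | _ \<Rightarrow> 0))"

definition ftrans :: "mode \<Rightarrow> action \<Rightarrow> mode" where
  "ftrans x a =
     (if a = ActA then ModeA
      else if (x, a) \<in> {(ModeO, ActP), (ModeO, ActS), (ModeM, ActR1)} then ModeO
      else if (x, a) \<in> {(ModeO, ActM1), (ModeM, ActMN)} then ModeM
      else ModeA)"

definition gstage :: "plp_data \<Rightarrow> nat \<Rightarrow> mode \<Rightarrow> action \<Rightarrow> nat" where
  "gstage d i x a =
     (if (x, a) = (ModeO, ActM1) then i + nM d
      else if (x, a) = (ModeM, ActR1) then i + nR d
      else i + 1)"

definition penalty :: "plp_data \<Rightarrow> (nat \<Rightarrow> mode \<Rightarrow> nat \<Rightarrow> real) \<Rightarrow> nat \<Rightarrow> nat \<Rightarrow> mode \<Rightarrow> action \<Rightarrow> real" where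
  "penalty d \<beta> l i x a =
     (let j = gstage d i x a; x' = ftrans x a in
      if x' \<in> {ModeO, ModeM} \<and> j \<le> nI d - 2
      then (\<Sum>b\<in>{1..nB d j}. \<beta> j x' b * pen d l i j b) else 0)"

definition plp_feasible :: "plp_data \<Rightarrow> mode \<Rightarrow> (nat \<Rightarrow> mode \<Rightarrow> nat \<Rightarrow> real)
                            \<Rightarrow> (nat \<Rightarrow> nat \<Rightarrow> mode \<Rightarrow> real) \<Rightarrow> bool" where
  "plp_feasible d x0 \<beta> U \<longleftrightarrow>
     (\<forall>l\<in>{1..nL d}.
        (\<forall>a\<in>feas_act d 0 x0.
           U l 0 x0 \<ge> reward d x0 (spot d l 0) a - penalty d \<beta> l 0 x0 a
                      + disc d * U l (gstage d 0 x0 a) (ftrans x0 a)) \<and>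
        (\<forall>i\<in>{1..nI d - 2}. \<forall>x::mode. \<forall>a\<in>feas_act d i x.
           U l i x \<ge> reward d x (spot d l i) a - penalty d \<beta> l i x a
                      + disc d * U l (gstage d i x a) (ftrans x a)) \<and>
        (\<forall>x::mode. U l (nI d - 1) x \<ge> reward d x (spot d l (nI d - 1)) ActA))"

definition plp_obj :: "plp_data \<Rightarrow> mode \<Rightarrow> (nat \<Rightarrow> nat \<Rightarrow> mode \<Rightarrow> real) \<Rightarrow> real" where
  "plp_obj d x0 U = (1 / real (nL d)) * (\<Sum>l\<in>{1..nL d}. U l 0 x0)"

end

(*
  Feasibility: with zero weights beta, the constant U = R / (1 - delta), where R >= 0 is an
  upper bound of all rewards, satisfies every constraint since R + delta U = U.

  Boundedness: abandoning earns reward 0 and carries no penalty, so backward induction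
  along the abandoned mode gives U^l_i(A) >= 0, and the abandon action at stage 0 gives
  U^l_0(x0) >= S + delta U^l_1(A) >= S.

  Attainment: PLP is a linear program in finitely many variables, so the set of its
  objective values is the projection of a polyhedron onto a line. Eliminating all other
  variables by Fourier-Motzkin leaves finitely many constraints c w <= e on the value w,
  so that set is closed; being nonempty and bounded below, it contains its infimum.
*)
theory Submission
  imports Defs "HOL-Analysis.Analysis"
begin

section \<open>Fourier--Motzkin elimination\<close>

definition lin_form :: "'v set \<Rightarrow> ('v \<Rightarrow> real) \<Rightarrow> ('v \<Rightarrow> real) \<Rightarrow> real" where
  "lin_form W a z = (\<Sum>v\<in>W. a v * z v)"

definition solves :: "'v set \<Rightarrow> (('v \<Rightarrow> real) \<times> real) set \<Rightarrow> ('v \<Rightarrow> real) \<Rightarrow> bool" where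
  "solves W C z \<longleftrightarrow> (\<forall>c\<in>C. lin_form W (fst c) z \<le> snd c)"

lemma lin_form_combine:
  "lin_form W (\<lambda>u. c1 * a1 u + c2 * a2 u) z = c1 * lin_form W a1 z + c2 * lin_form W a2 z"
  unfolding lin_form_def by (simp add: algebra_simps sum.distrib sum_distrib_left)

lemma lin_form_cong: "(\<And>u. u \<in> W \<Longrightarrow> z u = z' u) \<Longrightarrow> lin_form W a z = lin_form W a z'"
  unfolding lin_form_def by (simp cong: sum.cong)

lemma solves_cong:
  assumes "\<And>u. u \<in> W \<Longrightarrow> z u = z' u"
  shows "solves W C z \<longleftrightarrow> solves W C z'"
  unfolding solves_def using lin_form_cong[of W z z', OF assms] by simp

lemma lin_form_fun_upd_zero_coeff: "a v = 0 \<Longrightarrow> lin_form W a (z(v := r)) = lin_form W a z"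
  unfolding lin_form_def by (intro sum.cong) auto

lemma lin_form_fun_upd:
  assumes "finite W" "v \<in> W"
  shows "lin_form W a (z(v := r)) = lin_form (W - {v}) a z + a v * r"
proof -
  have "lin_form W a (z(v := r)) = a v * r + lin_form (W - {v}) a (z(v := r))"
    unfolding lin_form_def using sum.remove[OF assms, of "\<lambda>u. a u * (z(v := r)) u"] by simp
  moreover have "lin_form (W - {v}) a (z(v := r)) = lin_form (W - {v}) a z"
    by (rule lin_form_cong) auto
  ultimately show ?thesis by simp
qed

lemma exists_between_finite_sets:
  fixes L U :: "real set"
  assumes "finite L" "finite U" "\<And>l u. l \<in> L \<Longrightarrow> u \<in> U \<Longrightarrow> l \<le> u"
  shows "\<exists>r. (\<forall>l\<in>L. l \<le> r) \<and> (\<forall>u\<in>U. r \<le> u)"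
proof (cases "L = {}")
  case True
  show ?thesis
    by (rule exI[of _ "if U = {} then 0 else Min U"]) (use True assms in auto)
next
  case False
  show ?thesis
    by (rule exI[of _ "Max L"]) (use False assms in auto)
qed

definition fm_combine :: "'v \<Rightarrow> ('v \<Rightarrow> real) \<times> real \<Rightarrow> ('v \<Rightarrow> real) \<times> real \<Rightarrow> ('v \<Rightarrow> real) \<times> real" where
  "fm_combine v p n =
     ((\<lambda>u. - fst n v * fst p u + fst p v * fst n u), - fst n v * snd p + fst p v * snd n)"

definition fm_elim :: "'v \<Rightarrow> (('v \<Rightarrow> real) \<times> real) set \<Rightarrow> (('v \<Rightarrow> real) \<times> real) set" where
  "fm_elim v C = {c\<in>C. fst c v = 0}
     \<union> (\<lambda>(p, n). fm_combine v p n) ` ({c\<in>C. 0 < fst c v} \<times> {c\<in>C. fst c v < 0})"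

lemma finite_fm_elim: "finite C \<Longrightarrow> finite (fm_elim v C)"
  unfolding fm_elim_def by auto

lemma fm_elim_coeff_zero:
  assumes c: "c \<in> fm_elim v C" and u: "u = v \<or> (\<forall>c\<in>C. fst c u = 0)"
  shows "fst c u = 0"
proof -
  consider "c \<in> C" "fst c v = 0" | p n where "p \<in> C" "n \<in> C" "c = fm_combine v p n"
    using c unfolding fm_elim_def by auto
  then show ?thesis
  proof cases
    case 1
    then show ?thesis using u by auto
  next
    case (2 p n)
    then have "u = v \<or> fst p u = 0 \<and> fst n u = 0" using u by blast
    then show ?thesis using 2 by (auto simp: fm_combine_def)
  qed
qed

lemma fm_elim_sound:
  assumes "solves W C (z(v := r))"
  shows "solves W (fm_elim v C) z"
  unfolding solves_def
proof
  fix c assume "c \<in> fm_elim v C"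
  then consider "c \<in> C" "fst c v = 0"
    | p n where "p \<in> C" "0 < fst p v" "n \<in> C" "fst n v < 0" "c = fm_combine v p n"
    unfolding fm_elim_def by auto
  then show "lin_form W (fst c) z \<le> snd c"
  proof cases
    case 1
    then show ?thesis using assms lin_form_fun_upd_zero_coeff unfolding solves_def by metis
  next
    case (2 p n)
    have "lin_form W (fst c) z = lin_form W (fst c) (z(v := r))"
      by (simp add: lin_form_fun_upd_zero_coeff "2"(5) fm_combine_def)
    also have "\<dots> = - fst n v * lin_form W (fst p) (z(v := r)) + fst p v * lin_form W (fst n) (z(v := r))"
      unfolding "2"(5) fm_combine_def fst_conv by (rule lin_form_combine)
    also have "\<dots> \<le> - fst n v * snd p + fst p v * snd n"
      using assms 2 unfolding solves_def by (intro add_mono mult_left_mono) auto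
    finally show ?thesis by (simp add: "2"(5) fm_combine_def)
  qed
qed

text \<open>Writing \<open>R c\<close> for the slack of constraint \<open>c\<close> once \<open>v\<close> is removed, constraint \<open>c\<close>
  reads \<open>fst c v * r \<le> R c\<close>; the combined constraint says that each resulting lower
  bound on \<open>r\<close> lies below each upper bound.\<close>

lemma fm_combine_bounds:
  assumes W: "finite W" "v \<in> W" and p: "0 < fst p v" and n: "fst n v < 0"
    and comb: "lin_form W (fst (fm_combine v p n)) z \<le> snd (fm_combine v p n)"
  defines "R \<equiv> \<lambda>c. snd c - lin_form (W - {v}) (fst c) z"
  shows "R n / fst n v \<le> R p / fst p v"
proof -
  have "lin_form W (fst (fm_combine v p n)) z = lin_form (W - {v}) (fst (fm_combine v p n)) z"
    using lin_form_fun_upd[OF W, of "fst (fm_combine v p n)" z "z v"]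
    by (simp add: fm_combine_def)
  also have "\<dots> = - fst n v * lin_form (W - {v}) (fst p) z + fst p v * lin_form (W - {v}) (fst n) z"
    unfolding fm_combine_def fst_conv by (rule lin_form_combine)
  finally have "0 \<le> - fst n v * R p + fst p v * R n"
    using comb unfolding R_def fm_combine_def by (simp add: algebra_simps)
  then have "0 \<le> (- fst n v * R p + fst p v * R n) / (fst p v * - fst n v)"
    using p n by (intro divide_nonneg_pos) (auto simp: mult_pos_neg)
  also have "\<dots> = R p / fst p v - R n / fst n v"
    using p n by (simp add: field_simps)
  finally show ?thesis by simp
qed

lemma fm_elim_complete:
  assumes W: "finite W" "v \<in> W" and C: "finite C" and sol: "solves W (fm_elim v C) z"
  shows "\<exists>r. solves W C (z(v := r))"
proof -
  define R where "R c = snd c - lin_form (W - {v}) (fst c) z" for c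
  define P where "P = {c\<in>C. 0 < fst c v}"
  define N where "N = {c\<in>C. fst c v < 0}"
  have "\<exists>r. (\<forall>l\<in>(\<lambda>c. R c / fst c v) ` N. l \<le> r) \<and> (\<forall>u\<in>(\<lambda>c. R c / fst c v) ` P. r \<le> u)"
  proof (rule exists_between_finite_sets)
    fix l u assume "l \<in> (\<lambda>c. R c / fst c v) ` N" "u \<in> (\<lambda>c. R c / fst c v) ` P"
    then obtain n p where np: "n \<in> N" "p \<in> P" and "l = R n / fst n v" "u = R p / fst p v"
      by blast
    moreover have "fm_combine v p n \<in> fm_elim v C"
      using np unfolding fm_elim_def P_def N_def by force
    ultimately show "l \<le> u"
      using fm_combine_bounds[OF W, of p n z] sol np unfolding solves_def R_def P_def N_def by auto
  qed (use C in \<open>auto simp: P_def N_def\<close>)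
  then obtain r where lower: "\<And>n. n \<in> N \<Longrightarrow> R n / fst n v \<le> r"
    and upper: "\<And>p. p \<in> P \<Longrightarrow> r \<le> R p / fst p v"
    by blast
  have "lin_form W (fst c) (z(v := r)) \<le> snd c" if c: "c \<in> C" for c
  proof -
    consider "fst c v = 0" | "0 < fst c v" | "fst c v < 0" by linarith
    then have "fst c v * r \<le> R c"
    proof cases
      case 1
      then have "c \<in> fm_elim v C" using c unfolding fm_elim_def by auto
      then have "lin_form W (fst c) (z(v := z v)) \<le> snd c" using sol unfolding solves_def by simp
      then show ?thesis using 1 lin_form_fun_upd[OF W, of "fst c" z "z v"] unfolding R_def by simp
    next
      case 2
      then show ?thesis using upper[of c] c unfolding P_def by (simp add: le_divide_eq mult.commute)
    next
      case 3
      then show ?thesis using lower[of c] c unfolding N_def by (simp add: divide_le_eq mult.commute)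
    qed
    then show ?thesis using lin_form_fun_upd[OF W] unfolding R_def by simp
  qed
  then show ?thesis unfolding solves_def by blast
qed

lemma solves_fm_elim_iff:
  assumes "finite W" "v \<in> W" "finite C"
  shows "solves W (fm_elim v C) z \<longleftrightarrow> (\<exists>r. solves W C (z(v := r)))"
proof
  assume "solves W (fm_elim v C) z"
  then show "\<exists>r. solves W C (z(v := r))" by (rule fm_elim_complete[OF assms])
next
  assume "\<exists>r. solves W C (z(v := r))"
  then show "solves W (fm_elim v C) z" by (elim exE) (rule fm_elim_sound)
qed

lemma fm_elim_vars:
  assumes W: "finite W" and V: "V \<subseteq> W" and C: "finite C"
  shows "\<exists>C'. finite C' \<and> (\<forall>c\<in>C'. \<forall>u\<in>V. fst c u = 0)
           \<and> (\<forall>z. solves W C' z \<longleftrightarrow> (\<exists>y. solves W C (override_on z y V)))"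
proof -
  have "finite V" using V W finite_subset by blast
  then show ?thesis using V
  proof (induction V rule: finite_induct)
    case empty
    show ?case by (rule exI[of _ C]) (use C in simp)
  next
    case (insert v V)
    then have v: "v \<in> W" and "V \<subseteq> W" by simp_all
    obtain C' where C': "finite C'" "\<forall>c\<in>C'. \<forall>u\<in>V. fst c u = 0"
      "\<forall>z. solves W C' z \<longleftrightarrow> (\<exists>y. solves W C (override_on z y V))"
      using insert.IH[OF \<open>V \<subseteq> W\<close>] by (elim exE conjE) (rule that)
    have override: "override_on (z(v := r)) y V = override_on z (y(v := r)) (insert v V)" for z y r
      using \<open>v \<notin> V\<close> by (simp add: override_on_def fun_eq_iff)
    have step: "solves W (fm_elim v C') z \<longleftrightarrow> (\<exists>y. solves W C (override_on z y (insert v V)))" for z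
    proof -
      have "solves W (fm_elim v C') z \<longleftrightarrow> (\<exists>r y. solves W C (override_on z (y(v := r)) (insert v V)))"
        by (simp only: solves_fm_elim_iff[OF W v C'(1)] C'(3)[rule_format] override)
      also have "\<dots> \<longleftrightarrow> (\<exists>y. solves W C (override_on z y (insert v V)))"
      proof
        assume "\<exists>y. solves W C (override_on z y (insert v V))"
        then obtain y where "solves W C (override_on z y (insert v V))" ..
        then show "\<exists>r y. solves W C (override_on z (y(v := r)) (insert v V))"
          by (intro exI[of _ "y v"] exI[of _ y]) simp
      qed blast
      finally show ?thesis .
    qed
    show ?case
    proof (intro exI[of _ "fm_elim v C'"] conjI allI)
      show "finite (fm_elim v C')" using C'(1) by (rule finite_fm_elim)
      show "\<forall>c\<in>fm_elim v C'. \<forall>u\<in>insert v V. fst c u = 0"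
        using fm_elim_coeff_zero[of _ v C'] C'(2) by blast
    qed (rule step)
  qed
qed

lemma closed_projection:
  assumes W: "finite W" and t: "t \<in> W" and C: "finite C"
  shows "closed {z t |z. solves W C z}"
proof -
  obtain C' where C': "finite C'" "\<forall>c\<in>C'. \<forall>u\<in>W - {t}. fst c u = 0"
    "\<forall>z. solves W C' z \<longleftrightarrow> (\<exists>y. solves W C (override_on z y (W - {t})))"
    using fm_elim_vars[OF W Diff_subset[of W "{t}"] C] by (elim exE conjE) (rule that)
  have single: "lin_form W (fst c) (\<lambda>_. w) = fst c t * w" if "c \<in> C'" for c w
  proof -
    have "lin_form W (fst c) (\<lambda>_. w) = (\<Sum>u\<in>W. if u = t then fst c t * w else 0)"
      unfolding lin_form_def by (rule sum.cong) (use C'(2) that in auto)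
    also have "\<dots> = fst c t * w" using W t by simp
    finally show ?thesis .
  qed
  have "{z t |z. solves W C z} = {w. solves W C' (\<lambda>_. w)}"
  proof (intro set_eqI iffI)
    fix w assume "w \<in> {z t |z. solves W C z}"
    then obtain z where z: "w = z t" "solves W C z" by blast
    have "solves W C (override_on (\<lambda>_. w) z (W - {t})) \<longleftrightarrow> solves W C z"
      using z(1) by (intro solves_cong) (simp add: override_on_def)
    then show "w \<in> {w. solves W C' (\<lambda>_. w)}"
      unfolding mem_Collect_eq C'(3)[rule_format] using z(2) by (intro exI[of _ z]) simp
  next
    fix w assume "w \<in> {w. solves W C' (\<lambda>_. w)}"
    then obtain y where "solves W C (override_on (\<lambda>_. w) y (W - {t}))"
      unfolding mem_Collect_eq C'(3)[rule_format] ..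
    then show "w \<in> {z t |z. solves W C z}"
      by (intro CollectI exI[of _ "override_on (\<lambda>_. w) y (W - {t})"]) simp
  qed
  also have "\<dots> = (\<Inter>c\<in>C'. {w. fst c t * w \<le> snd c})"
    using single unfolding solves_def by auto
  finally show ?thesis
    by (simp only:) (intro closed_INT ballI closed_Collect_le continuous_intros)
qed

section \<open>Linear objectives over polyhedra\<close>

lemma range_lin_form_zero: "(\<lambda>z. 0) \<in> range (lin_form W)"
  by (rule range_eqI[of _ _ "\<lambda>_. 0"]) (simp add: lin_form_def fun_eq_iff)

lemma range_lin_form_coord: "finite W \<Longrightarrow> v \<in> W \<Longrightarrow> (\<lambda>z. z v) \<in> range (lin_form W)"
  by (rule range_eqI[of _ _ "\<lambda>u. of_bool (u = v)"]) (simp add: lin_form_def fun_eq_iff)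

lemma range_lin_form_add:
  assumes "f \<in> range (lin_form W)" "g \<in> range (lin_form W)"
  shows "(\<lambda>z. f z + g z) \<in> range (lin_form W)"
proof -
  obtain a b where "f = lin_form W a" "g = lin_form W b" using assms by blast
  then have "(\<lambda>z. f z + g z) = lin_form W (\<lambda>u. a u + b u)"
    by (simp add: lin_form_def fun_eq_iff algebra_simps sum.distrib)
  then show ?thesis by blast
qed

lemma range_lin_form_scale:
  assumes "f \<in> range (lin_form W)"
  shows "(\<lambda>z. c * f z) \<in> range (lin_form W)"
proof -
  obtain a where "f = lin_form W a" using assms by blast
  then have "(\<lambda>z. c * f z) = lin_form W (\<lambda>u. c * a u)"
    by (simp add: lin_form_def fun_eq_iff sum_distrib_left mult.assoc)
  then show ?thesis by blast
qed

lemma range_lin_form_uminus: "f \<in> range (lin_form W) \<Longrightarrow> (\<lambda>z. - f z) \<in> range (lin_form W)"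
  using range_lin_form_scale[of f W "-1"] by simp

lemma range_lin_form_diff:
  "f \<in> range (lin_form W) \<Longrightarrow> g \<in> range (lin_form W) \<Longrightarrow> (\<lambda>z. f z - g z) \<in> range (lin_form W)"
  using range_lin_form_add[of f W "\<lambda>z. - g z"] range_lin_form_uminus[of g W] by simp

lemma range_lin_form_sum:
  "finite S \<Longrightarrow> (\<And>s. s \<in> S \<Longrightarrow> f s \<in> range (lin_form W)) \<Longrightarrow> (\<lambda>z. \<Sum>s\<in>S. f s z) \<in> range (lin_form W)"
proof (induction S rule: finite_induct)
  case empty
  show ?case using range_lin_form_zero by simp
next
  case (insert s S)
  then show ?case using range_lin_form_add[of "f s" W "\<lambda>z. \<Sum>s\<in>S. f s z"] by simp
qed

text \<open>The value set of a linear objective is the projection onto a fresh coordinate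
  \<open>None\<close> that is constrained to equal the objective.\<close>

lemma closed_lin_form_image:
  assumes W: "finite W" and C: "finite C"
  shows "closed {lin_form W a z |z. solves W C z}"
proof -
  define W' :: "'a option set" where "W' = insert None (Some ` W)"
  have lift: "lin_form W' (case_option c b) z' = c * z' None + lin_form W b (z' \<circ> Some)" for c b z'
    using W unfolding W'_def lin_form_def by (simp add: sum.reindex)
  define C' where "C' = (\<lambda>c. (case_option 0 (fst c), snd c)) ` C
    \<union> {(case_option (-1) a, 0), (case_option 1 (\<lambda>u. - a u), 0)}"
  have lin_neg: "lin_form W (\<lambda>u. - a u) z = - lin_form W a z" for z
    unfolding lin_form_def by (simp add: sum_negf)
  have solves_C': "solves W' C' z' \<longleftrightarrow> solves W C (z' \<circ> Some) \<and> z' None = lin_form W a (z' \<circ> Some)"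
    for z'
    unfolding C'_def solves_def by (auto simp: lift lin_neg)
  have "{lin_form W a z |z. solves W C z} = {z' None |z'. solves W' C' z'}"
  proof (intro set_eqI iffI)
    fix w assume "w \<in> {lin_form W a z |z. solves W C z}"
    then obtain z where "w = lin_form W a z" "solves W C z" by blast
    moreover have "case_option (lin_form W a z) z \<circ> Some = z" by (simp add: fun_eq_iff)
    ultimately show "w \<in> {z' None |z'. solves W' C' z'}"
      by (intro CollectI exI[of _ "case_option (lin_form W a z) z"]) (simp add: solves_C')
  next
    fix w assume "w \<in> {z' None |z'. solves W' C' z'}"
    then show "w \<in> {lin_form W a z |z. solves W C z}" by (auto simp: solves_C')
  qed
  moreover have "closed {z' None |z'. solves W' C' z'}"
    by (rule closed_projection) (use W C in \<open>auto simp: W'_def C'_def\<close>)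
  ultimately show ?thesis by simp
qed

lemma closed_lin_functional_image:
  assumes W: "finite W" and F: "finite F" and lin: "\<And>f b. (f, b) \<in> F \<Longrightarrow> f \<in> range (lin_form W)"
    and \<phi>: "\<phi> \<in> range (lin_form W)"
  shows "closed {\<phi> z |z. \<forall>(f, b)\<in>F. f z \<le> b}"
proof -
  obtain a where a: "\<phi> = lin_form W a" using \<phi> by blast
  define C where "C = (\<lambda>(f, b). (inv (lin_form W) f, b)) ` F"
  have "solves W C z \<longleftrightarrow> (\<forall>(f, b)\<in>F. f z \<le> b)" for z
    unfolding solves_def C_def using lin by (auto simp: f_inv_into_f)
  then have "{\<phi> z |z. \<forall>(f, b)\<in>F. f z \<le> b} = {lin_form W a z |z. solves W C z}"
    by (simp add: a)
  moreover have "finite C" using F by (simp add: C_def)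
  ultimately show ?thesis using closed_lin_form_image[OF W] by simp
qed

section \<open>The pathwise linear program\<close>

instance mode :: finite
proof
  have UNIV_eq: "UNIV = {ModeA, ModeM, ModeO}" using mode.exhaust by auto
  show "finite (UNIV :: mode set)" by (simp add: UNIV_eq)
qed

instance action :: finite
proof
  have UNIV_eq: "UNIV = {ActA, ActM1, ActP, ActS, ActMN, ActR1}" using action.exhaust by auto
  show "finite (UNIV :: action set)" by (simp add: UNIV_eq)
qed

lemma ActA_feas_act: "ActA \<in> feas_act d i x"
  unfolding feas_act_def by (cases x) auto

lemma ftrans_ActA: "ftrans x ActA = ModeA"
  by (simp add: ftrans_def)

lemma gstage_ActA: "gstage d i x ActA = i + 1"
  by (simp add: gstage_def)

lemma gstage_le: "gstage d i x a \<le> i + nM d + nR d + 1"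
  by (simp add: gstage_def)

lemma penalty_ActA: "penalty d \<beta> l i x ActA = 0"
  by (simp add: penalty_def ftrans_ActA)

lemma reward_ModeA_ActA: "reward d ModeA s ActA = 0"
  by (cases s) (simp add: reward_def)

lemma reward_ActA_salvage: "x \<in> {ModeO, ModeM} \<Longrightarrow> reward d x s ActA = salv d"
  by (cases s) (auto simp: reward_def)

lemma plp_feasible_constant:
  assumes R: "0 \<le> R" "\<And>l i x a. l \<in> {1..nL d} \<Longrightarrow> i \<le> nI d \<Longrightarrow> reward d x (spot d l i) a \<le> R"
    and disc: "0 \<le> disc d" "disc d < 1"
  shows "plp_feasible d x0 (\<lambda>_ _ _. 0) (\<lambda>_ _ _. R / (1 - disc d))"
proof -
  define K where "K = R / (1 - disc d)"
  have K: "R + disc d * K = K" using disc unfolding K_def by (simp add: field_simps)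
  have "0 \<le> disc d * K" using R(1) disc unfolding K_def by simp
  then have "R \<le> K" using K by linarith
  have zero: "penalty d (\<lambda>_ _ _. 0) l i x a = 0" for l i x a
    by (simp add: penalty_def Let_def)
  show ?thesis
    unfolding plp_feasible_def K_def[symmetric]
  proof (intro ballI allI conjI)
    fix l a assume "l \<in> {1..nL d}"
    then show "reward d x0 (spot d l 0) a - penalty d (\<lambda>_ _ _. 0) l 0 x0 a
        + disc d * K \<le> K"
      using R(2)[of l 0 x0 a] K zero by simp
  next
    fix l i x a assume "l \<in> {1..nL d}" "i \<in> {1..nI d - 2}"
    then have "l \<in> {1..nL d}" "i \<le> nI d" by auto
    then show "reward d x (spot d l i) a - penalty d (\<lambda>_ _ _. 0) l i x a
        + disc d * K \<le> K"
      using R(2)[of l i x a] K zero by simp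
  next
    fix l x assume "l \<in> {1..nL d}"
    then show "reward d x (spot d l (nI d - 1)) ActA \<le> K"
      using R(2)[of l "nI d - 1" x ActA] \<open>R \<le> K\<close> by simp
  qed
qed

lemma plp_feasible_exists:
  assumes "0 \<le> disc d" "disc d < 1"
  shows "\<exists>\<beta> U. plp_feasible d x0 \<beta> U"
proof -
  define rewards where "rewards = (\<lambda>(l, i, x, a). reward d x (spot d l i) a)
    ` ({1..nL d} \<times> {..nI d} \<times> (UNIV :: mode set) \<times> (UNIV :: action set))"
  have "finite rewards" unfolding rewards_def by simp
  moreover have "reward d x (spot d l i) a \<in> rewards"
    if "l \<in> {1..nL d}" "i \<le> nI d" for l i x a
    unfolding rewards_def using that by (intro image_eqI[where x = "(l, i, x, a)"]) auto
  ultimately have "reward d x (spot d l i) a \<le> Max (insert 0 rewards)"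
    if "l \<in> {1..nL d}" "i \<le> nI d" for l i x a
    using that by (intro Max_ge) auto
  moreover have "0 \<le> Max (insert 0 rewards)"
    using \<open>finite rewards\<close> by simp
  ultimately have "plp_feasible d x0 (\<lambda>_ _ _. 0) (\<lambda>_ _ _. Max (insert 0 rewards) / (1 - disc d))"
    by (intro plp_feasible_constant[OF _ _ assms])
  then show ?thesis by blast
qed

lemma plp_feasible_abandoned_nonneg:
  assumes F: "plp_feasible d x0 \<beta> U" and l: "l \<in> {1..nL d}" and disc: "0 \<le> disc d"
  shows "1 \<le> i \<Longrightarrow> i \<le> nI d - 1 \<Longrightarrow> 0 \<le> U l i ModeA"
proof (induction "nI d - 1 - i" arbitrary: i)
  case 0
  have "reward d ModeA (spot d l (nI d - 1)) ActA \<le> U l (nI d - 1) ModeA"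
    using F l unfolding plp_feasible_def by blast
  moreover have "i = nI d - 1" using 0 by simp
  ultimately show ?case by (simp add: reward_ModeA_ActA)
next
  case (Suc k)
  then have i: "i \<in> {1..nI d - 2}" and "0 \<le> U l (i + 1) ModeA" by auto
  have "reward d ModeA (spot d l i) ActA - penalty d \<beta> l i ModeA ActA
      + disc d * U l (gstage d i ModeA ActA) (ftrans ModeA ActA) \<le> U l i ModeA"
    using F l i ActA_feas_act[of d i ModeA] unfolding plp_feasible_def by blast
  then have "disc d * U l (i + 1) ModeA \<le> U l i ModeA"
    by (simp add: reward_ModeA_ActA penalty_ActA gstage_ActA ftrans_ActA)
  moreover have "0 \<le> disc d * U l (i + 1) ModeA"
    using \<open>0 \<le> U l (i + 1) ModeA\<close> disc by (simp add: mult_nonneg_nonneg)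
  ultimately show ?case by linarith
qed

lemma plp_obj_ge_salvage:
  assumes F: "plp_feasible d x0 \<beta> U" and "2 \<le> nI d" "1 \<le> nL d" "0 \<le> disc d"
    and x0: "x0 \<in> {ModeO, ModeM}"
  shows "salv d \<le> plp_obj d x0 U"
proof -
  have "salv d \<le> U l 0 x0" if l: "l \<in> {1..nL d}" for l
  proof -
    have "reward d x0 (spot d l 0) ActA - penalty d \<beta> l 0 x0 ActA
        + disc d * U l (gstage d 0 x0 ActA) (ftrans x0 ActA) \<le> U l 0 x0"
      using F l ActA_feas_act[of d 0 x0] unfolding plp_feasible_def by blast
    then have "salv d + disc d * U l 1 ModeA \<le> U l 0 x0"
      using x0 by (simp add: reward_ActA_salvage penalty_ActA gstage_ActA ftrans_ActA)
    moreover have "0 \<le> disc d * U l 1 ModeA"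
      using plp_feasible_abandoned_nonneg[OF F l, of 1] assms by (simp add: mult_nonneg_nonneg)
    ultimately show ?thesis by linarith
  qed
  then have "real (nL d) * salv d \<le> (\<Sum>l\<in>{1..nL d}. U l 0 x0)"
    using sum_mono[of "{1..nL d}" "\<lambda>_. salv d"] by simp
  then show ?thesis unfolding plp_obj_def using assms by (simp add: field_simps)
qed

type_synonym plp_var = "(nat \<times> mode \<times> nat) + (nat \<times> nat \<times> mode)"

text \<open>The stage bound covers every successor stage \<open>gstage d i x a\<close> of a stage \<open>i \<le> nI d\<close>.\<close>

definition plp_vars :: "plp_data \<Rightarrow> plp_var set" where
  "plp_vars d = Inl ` (SIGMA j:{..nI d}. UNIV \<times> {..nB d j})
     \<union> Inr ` ({..nL d} \<times> {..nI d + nM d + nR d + 1} \<times> UNIV)"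

definition weights_of :: "(plp_var \<Rightarrow> real) \<Rightarrow> nat \<Rightarrow> mode \<Rightarrow> nat \<Rightarrow> real" where
  "weights_of z j x b = z (Inl (j, x, b))"

definition values_of :: "(plp_var \<Rightarrow> real) \<Rightarrow> nat \<Rightarrow> nat \<Rightarrow> mode \<Rightarrow> real" where
  "values_of z l i x = z (Inr (l, i, x))"

definition plp_constraints :: "plp_data \<Rightarrow> mode \<Rightarrow> (((plp_var \<Rightarrow> real) \<Rightarrow> real) \<times> real) set" where
  "plp_constraints d x0 =
     (\<lambda>(l, i, x, a).
        (\<lambda>z. disc d * values_of z l (gstage d i x a) (ftrans x a)
               - penalty d (weights_of z) l i x a - values_of z l i x,
         - reward d x (spot d l i) a))
       ` {(l, i, x, a). l \<in> {1..nL d} \<and> (i = 0 \<and> x = x0 \<or> i \<in> {1..nI d - 2}) \<and> a \<in> feas_act d i x}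
   \<union> (\<lambda>(l, x). (\<lambda>z. - values_of z l (nI d - 1) x, - reward d x (spot d l (nI d - 1)) ActA))
       ` ({1..nL d} \<times> UNIV)"

lemma finite_plp_vars: "finite (plp_vars d)"
  unfolding plp_vars_def by (intro finite_UnI finite_imageI finite_SigmaI finite_cartesian_product) auto

lemma finite_plp_constraints: "finite (plp_constraints d x0)"
proof -
  have "{(l, i, x, a). l \<in> {1..nL d} \<and> (i = 0 \<and> x = x0 \<or> i \<in> {1..nI d - 2}) \<and> a \<in> feas_act d i x}
      \<subseteq> {..nL d} \<times> {..nI d} \<times> UNIV \<times> UNIV"
    by auto
  then have "finite {(l, i, x, a). l \<in> {1..nL d} \<and> (i = 0 \<and> x = x0 \<or> i \<in> {1..nI d - 2})
      \<and> a \<in> feas_act d i x}"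
    by (rule finite_subset) simp
  then show ?thesis by (simp add: plp_constraints_def)
qed

lemma plp_feasible_iff_constraints:
  "plp_feasible d x0 (weights_of z) (values_of z) \<longleftrightarrow> (\<forall>(f, b)\<in>plp_constraints d x0. f z \<le> b)"
proof -
  have ball_image: "(\<forall>c\<in>g ` A. P c) \<longleftrightarrow> (\<forall>a\<in>A. P (g a))" for g :: "'a \<Rightarrow> 'b" and A P
    by blast
  show ?thesis
    unfolding plp_feasible_def plp_constraints_def ball_Un ball_image by (auto simp: algebra_simps)
qed

lemma lin_form_values_of:
  "l \<le> nL d \<Longrightarrow> i \<le> nI d + nM d + nR d + 1 \<Longrightarrow> (\<lambda>z. values_of z l i x) \<in> range (lin_form (plp_vars d))"
  unfolding values_of_def by (rule range_lin_form_coord) (auto simp: finite_plp_vars plp_vars_def)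

lemma lin_form_penalty: "(\<lambda>z. penalty d (weights_of z) l i x a) \<in> range (lin_form (plp_vars d))"
proof -
  define j where "j = gstage d i x a"
  define x' where "x' = ftrans x a"
  have "(\<lambda>z. \<Sum>b\<in>{1..nB d j}. pen d l i j b * z (Inl (j, x', b))) \<in> range (lin_form (plp_vars d))"
    if "j \<le> nI d - 2"
    using that by (intro range_lin_form_sum range_lin_form_scale range_lin_form_coord)
      (auto simp: finite_plp_vars plp_vars_def)
  then have sum: "(\<lambda>z. \<Sum>b\<in>{1..nB d j}. z (Inl (j, x', b)) * pen d l i j b) \<in> range (lin_form (plp_vars d))"
    if "j \<le> nI d - 2"
    using that by (simp add: mult.commute)
  have cond: "(\<lambda>z. if C then f z else 0) \<in> range (lin_form W)"
    if "C \<Longrightarrow> f \<in> range (lin_form W)" for C and f :: "('a \<Rightarrow> real) \<Rightarrow> real" and W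
    using that range_lin_form_zero by (cases C) simp_all
  show ?thesis
    unfolding penalty_def Let_def weights_of_def j_def[symmetric] x'_def[symmetric]
    by (rule cond, rule sum) blast
qed

lemma lin_form_plp_constraints:
  assumes "(f, b) \<in> plp_constraints d x0"
  shows "f \<in> range (lin_form (plp_vars d))"
  using assms unfolding plp_constraints_def
proof (elim UnE imageE)
  fix p assume "(f, b) = (\<lambda>(l, i, x, a).
        (\<lambda>z. disc d * values_of z l (gstage d i x a) (ftrans x a)
               - penalty d (weights_of z) l i x a - values_of z l i x,
         - reward d x (spot d l i) a)) p"
    and "p \<in> {(l, i, x, a). l \<in> {1..nL d} \<and> (i = 0 \<and> x = x0 \<or> i \<in> {1..nI d - 2}) \<and> a \<in> feas_act d i x}"
  then obtain l i x a where f: "f = (\<lambda>z. disc d * values_of z l (gstage d i x a) (ftrans x a)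
               - penalty d (weights_of z) l i x a - values_of z l i x)"
    and "l \<le> nL d" "i \<le> nI d"
    by auto
  moreover have "gstage d i x a \<le> nI d + nM d + nR d + 1"
    using gstage_le[of d i x a] \<open>i \<le> nI d\<close> by simp
  ultimately show ?thesis
    unfolding f by (intro range_lin_form_diff range_lin_form_scale lin_form_values_of lin_form_penalty) auto
next
  fix p assume "(f, b) = (\<lambda>(l, x). (\<lambda>z. - values_of z l (nI d - 1) x,
      - reward d x (spot d l (nI d - 1)) ActA)) p" and "p \<in> {1..nL d} \<times> UNIV"
  then show ?thesis by (auto intro!: range_lin_form_uminus lin_form_values_of)
qed

lemma closed_plp_values: "closed {plp_obj d x0 U |\<beta> U. plp_feasible d x0 \<beta> U}"
proof -
  have "{plp_obj d x0 U |\<beta> U. plp_feasible d x0 \<beta> U}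
      = {plp_obj d x0 (values_of z) |z. \<forall>(f, b)\<in>plp_constraints d x0. f z \<le> b}"
  proof (intro set_eqI iffI)
    fix w assume "w \<in> {plp_obj d x0 U |\<beta> U. plp_feasible d x0 \<beta> U}"
    then obtain \<beta> U where w: "w = plp_obj d x0 U" and F: "plp_feasible d x0 \<beta> U" by blast
    define z where "z = case_sum (\<lambda>(j, x, b). \<beta> j x b) (\<lambda>(l, i, x). U l i x)"
    have "weights_of z = \<beta>" "values_of z = U"
      by (simp_all add: z_def weights_of_def values_of_def fun_eq_iff)
    then have "\<forall>(f, b)\<in>plp_constraints d x0. f z \<le> b"
      using F plp_feasible_iff_constraints[of d x0 z] by simp
    then show "w \<in> {plp_obj d x0 (values_of z) |z. \<forall>(f, b)\<in>plp_constraints d x0. f z \<le> b}"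
      using w \<open>values_of z = U\<close> by (intro CollectI exI[of _ z]) simp
  next
    fix w assume "w \<in> {plp_obj d x0 (values_of z) |z. \<forall>(f, b)\<in>plp_constraints d x0. f z \<le> b}"
    then obtain z where "w = plp_obj d x0 (values_of z)" "\<forall>(f, b)\<in>plp_constraints d x0. f z \<le> b"
      by blast
    then show "w \<in> {plp_obj d x0 U |\<beta> U. plp_feasible d x0 \<beta> U}"
      unfolding plp_feasible_iff_constraints[symmetric]
      by (intro CollectI exI[of _ "weights_of z"] exI[of _ "values_of z"]) simp
  qed
  moreover have "(\<lambda>z. plp_obj d x0 (values_of z)) \<in> range (lin_form (plp_vars d))"
    unfolding plp_obj_def
    by (intro range_lin_form_scale range_lin_form_sum lin_form_values_of) auto
  ultimately show ?thesis
    using closed_lin_functional_image[OF finite_plp_vars finite_plp_constraints lin_form_plp_constraints]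
    by simp
qed

lemma plp_optimum_exists:
  assumes feasible: "\<exists>\<beta> U. plp_feasible d x0 \<beta> U"
    and lower: "\<forall>\<beta> U. plp_feasible d x0 \<beta> U \<longrightarrow> m \<le> plp_obj d x0 U"
  shows "\<exists>\<beta> U. plp_feasible d x0 \<beta> U
           \<and> plp_obj d x0 U = (INF (\<beta>', U') \<in> {(\<beta>', U'). plp_feasible d x0 \<beta>' U'}. plp_obj d x0 U')
           \<and> (\<forall>\<beta>' U'. plp_feasible d x0 \<beta>' U' \<longrightarrow> plp_obj d x0 U \<le> plp_obj d x0 U')"
proof -
  define V where "V = {plp_obj d x0 U | \<beta> U. plp_feasible d x0 \<beta> U}"
  from feasible obtain \<beta>0 U0 where "plp_feasible d x0 \<beta>0 U0" by blast
  then have "V \<noteq> {}" unfolding V_def by blast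
  have bdd: "bdd_below V"
    unfolding V_def by (rule bdd_belowI[of _ m]) (use lower in blast)
  have "Inf V \<in> V"
    using \<open>V \<noteq> {}\<close> bdd closed_plp_values unfolding V_def by (rule closed_contains_Inf)
  moreover have "w \<in> V \<longleftrightarrow> (\<exists>\<beta> U. w = plp_obj d x0 U \<and> plp_feasible d x0 \<beta> U)" for w
    unfolding V_def by blast
  ultimately obtain \<beta> U where opt: "plp_obj d x0 U = Inf V" "plp_feasible d x0 \<beta> U"
    by metis
  have "(\<lambda>(\<beta>', U'). plp_obj d x0 U') ` {(\<beta>', U'). plp_feasible d x0 \<beta>' U'} = V"
    unfolding V_def by auto
  then have "plp_obj d x0 U = (INF (\<beta>', U') \<in> {(\<beta>', U'). plp_feasible d x0 \<beta>' U'}. plp_obj d x0 U')"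
    using opt(1) by simp
  moreover have "plp_obj d x0 U \<le> plp_obj d x0 U'" if "plp_feasible d x0 \<beta>' U'" for \<beta>' U'
    unfolding opt(1) by (rule cInf_lower[OF _ bdd]) (use that in \<open>auto simp: V_def\<close>)
  ultimately show ?thesis using opt(2) by blast
qed

theorem proposition1:
  fixes d :: plp_data and x0 :: mode
  assumes "nI d \<ge> 2" and "nM d \<ge> 1" and "nR d \<ge> 1" and "nL d \<ge> 1"
    and "\<forall>j. nB d j \<ge> 1"
    and "0 < disc d" and "disc d < 1"
    and "\<forall>l i. fst (spot d l i) \<ge> 0 \<and> fst (snd (spot d l i)) \<ge> 0 \<and> snd (snd (spot d l i)) \<ge> 0"
    and "x0 \<in> {ModeO, ModeM}"
  shows "(\<exists>\<beta> U. plp_feasible d x0 \<beta> U)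
       \<and> bdd_below {plp_obj d x0 U | \<beta> U. plp_feasible d x0 \<beta> U}
       \<and> (\<exists>\<beta> U. plp_feasible d x0 \<beta> U
              \<and> plp_obj d x0 U = (INF (\<beta>', U') \<in> {(\<beta>', U'). plp_feasible d x0 \<beta>' U'}. plp_obj d x0 U')
              \<and> (\<forall>\<beta>' U'. plp_feasible d x0 \<beta>' U' \<longrightarrow> plp_obj d x0 U \<le> plp_obj d x0 U'))"
proof -
  have feasible: "\<exists>\<beta> U. plp_feasible d x0 \<beta> U"
    using plp_feasible_exists assms(6,7) by simp
  have lower: "\<forall>\<beta> U. plp_feasible d x0 \<beta> U \<longrightarrow> salv d \<le> plp_obj d x0 U"
    by (intro allI impI plp_obj_ge_salvage) (use assms in auto)
  then have "bdd_below {plp_obj d x0 U | \<beta> U. plp_feasible d x0 \<beta> U}"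
    by (intro bdd_belowI[of _ "salv d"]) blast
  then show ?thesis
    using feasible plp_optimum_exists[OF feasible lower] by blast
qed

end
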